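(* Let the mesh, coefficients $a^{(n)}_{n-k}$, DCC kernels $p^{(n)}_{n-k}$ and consistency errors $R^n$ be as in the context (in particular $\tau_{n-1}\le\tau_n$ for $2\le n\le N$). Let $v\in C([0,T])\cap C^2((0,T])$ with $\int_0^T t|v''(t)|\,dt<\infty$. Then for every $1\le n\le N$, $$\sum_{j=1}^n p^{(n)}_{n-j}|R^j|\le 2\sum_{j=1}^n p^{(n)}_{n-j}a^{(j)}_0\int_{t_{j-3/2}}^{t_{j-1/2}}(t-t_{j-3/2})|v''(t)|\,dt .$$
   Context: Fix $T>0$, $0<\alpha<1$ and a mesh $0=t_0<t_1<\dots<t_N=T$ with step sizes $\tau_n=t_n-t_{n-1}$ satisfying $\tau_{n-1}\le\tau_n$ for $2\le n\le N$. Set $t_{-1/2}=t_0$, $t_{n-1/2}=t_{n-1}+\tau_n/2$ for $1\le n\le N$, $\tau_{1/2}=\tau_1/2$ and $\tau_{n-1/2}=(\tau_n+\tau_{n-1})/2$ for $n\ge 2$. Let $\omega_\gamma(t)=t^{\gamma-1}/\Gamma(\gamma)$ for $t>0$. For $1\le n\le N$ and $1\le k\le n$ define $$a^{(n)}_{n-k}=\frac{1}{\tau_{k-1/2}}\int_{t_{k-3/2}}^{t_{k-1/2}}\omega_{1-\alpha}(t_{n-1/2}-s)\,ds .$$ The discrete complementary convolution (DCC) kernels are defined by $p^{(n)}_0=1/a^{(n)}_0$ and $p^{(n)}_{n-k}=\frac{1}{a^{(k)}_0}\sum_{j=k+1}^n\big(a^{(j)}_{j-k-1}-a^{(j)}_{j-k}\big)p^{(n)}_{n-j}$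 for $1\le k\le n-1$; equivalently $\sum_{j=k}^n p^{(n)}_{n-j}a^{(j)}_{j-k}=1$ for all $1\le k\le n$. The Caputo derivative of order $\alpha$ is ${}^C_0D^\alpha_t v(t)=\int_0^t\omega_{1-\alpha}(t-s)v'(s)\,ds$, and the local consistency error at $t_{n-1/2}$ is $$R^n={}^C_0D^\alpha_t v(t_{n-1/2})-\sum_{k=1}^n a^{(n)}_{n-k}\big(v(t_{k-1/2})-v(t_{k-3/2})\big),\qquad 1\le n\le N.$$ *)

theory Defs
  imports "HOL-Analysis.Analysis"
begin

text \<open>Mesh t :: nat => real with t 0 = 0 < t 1 < ... < t N = T.
  Half-integer indices are shifted: thalf t k stands for t_{k-1/2} (k >= 1),
  thalf t 0 = t_0 stands for t_{-1/2}.\<close>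

definition tau :: "(nat \<Rightarrow> real) \<Rightarrow> nat \<Rightarrow> real" where
  "tau t n = t n - t (n - 1)"

definition thalf :: "(nat \<Rightarrow> real) \<Rightarrow> nat \<Rightarrow> real" where
  "thalf t k = (if k = 0 then t 0 else t (k - 1) + tau t k / 2)"

text \<open>tauhalf t k stands for tau_{k-1/2}, k >= 1.\<close>
definition tauhalf :: "(nat \<Rightarrow> real) \<Rightarrow> nat \<Rightarrow> real" where
  "tauhalf t k = (if k = 1 then tau t 1 / 2 else (tau t k + tau t (k - 1)) / 2)"

definition omega :: "real \<Rightarrow> real \<Rightarrow> real" where
  "omega \<gamma> x = x powr (\<gamma> - 1) / Gamma \<gamma>"

text \<open>acoef alpha t n k stands for a^{(n)}_{n-k}, 1 <= k <= n.\<close>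
definition acoef :: "real \<Rightarrow> (nat \<Rightarrow> real) \<Rightarrow> nat \<Rightarrow> nat \<Rightarrow> real" where
  "acoef \<alpha> t n k = (1 / tauhalf t k) *
     integral {thalf t (k - 1)..thalf t k} (\<lambda>s. omega (1 - \<alpha>) (thalf t n - s))"

text \<open>dcc A n k stands for p^{(n)}_{n-k} built from coefficients A (A n k = a^{(n)}_{n-k}).\<close>
function dcc_aux :: "(nat \<Rightarrow> nat \<Rightarrow> real) \<Rightarrow> nat \<Rightarrow> nat \<Rightarrow> real" where
  "dcc_aux A n k = (if n \<le> k then 1 / A n n
     else (1 / A k k) * (\<Sum>j\<in>{k+1..n}. (A j (k + 1) - A j k) * dcc_aux A n j))"
  by pat_completeness auto
termination by (relation "Wellfounded.measure (\<lambda>(A, n, k). n - k)") auto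

definition dcc :: "real \<Rightarrow> (nat \<Rightarrow> real) \<Rightarrow> nat \<Rightarrow> nat \<Rightarrow> real" where
  "dcc \<alpha> t n k = dcc_aux (acoef \<alpha> t) n k"

definition caputo :: "real \<Rightarrow> (real \<Rightarrow> real) \<Rightarrow> real \<Rightarrow> real" where
  "caputo \<alpha> v' x = integral {0..x} (\<lambda>s. omega (1 - \<alpha>) (x - s) * v' s)"

definition Rerr :: "real \<Rightarrow> (nat \<Rightarrow> real) \<Rightarrow> (real \<Rightarrow> real) \<Rightarrow> (real \<Rightarrow> real) \<Rightarrow> nat \<Rightarrow> real" where
  "Rerr \<alpha> t v v' n = caputo \<alpha> v' (thalf t n)
     - (\<Sum>k=1..n. acoef \<alpha> t n k * (v (thalf t k) - v (thalf t (k - 1))))"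

end

theory Submission
  imports Defs
begin

text \<open>
  On the cell [t_{k-3/2}, t_{k-1/2}] the coefficient a^{(j)}_{j-k} is the mean value A of the kernel
  s \<mapsto> \<omega>_{1-\<alpha>}(t_{j-1/2} - s), so the contribution of this cell to R^j is \<integral> (\<omega> - A) v'.
  Integrating by parts against the primitive W of \<omega> - A, which vanishes at both ends of the cell,
  turns it into -\<integral> W v''. Concavity of z \<mapsto> z^{1-\<alpha>} gives
  |W(s)| \<le> (A - \<omega>_{1-\<alpha>}(t_{j-1/2} - t_{k-3/2})) (s - t_{k-3/2}), and the trapezoidal rule for the convex
  function z \<mapsto> z^{-\<alpha>} shows that the factor in front is at most the increment a^{(j)}_{j-k-1} - a^{(j)}_{j-k}
  (at most a^{(j)}_0 when k = j). Weighting by the DCC kernels and exchanging the two sums, the recursion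
  defining the kernels bounds the total weight of cell k by 2 p^{(n)}_{n-k} a^{(k)}_0. The possible
  singularity of v' at 0 is harmless because \<integral> t |v''| < \<infinity> forces t v'(t) \<rightarrow> 0.
\<close>

section \<open>Tangent and secant bounds for powers\<close>

lemma powr_ge_tangent:
  fixes p y z :: real
  assumes "p < 0 \<or> p > 1" "z > 0" "y > 0"
  shows "z powr p + p * z powr (p - 1) * (y - z) \<le> y powr p"
proof -
  have "p * z powr (p - 1) * (y - z) \<le> y powr p - z powr p"
  proof (rule f''_imp_f'[where C = "{0<..}" and f'' = "\<lambda>x. p * (p - 1) * x powr (p - 2)"])
    show "DERIV (\<lambda>x. x powr p) x :> p * x powr (p - 1)" if "x \<in> {0<..}" for x
      using that by (intro has_real_derivative_powr) auto
    show "DERIV (\<lambda>x. p * x powr (p - 1)) x :> p * (p - 1) * x powr (p - 2)" if "x \<in> {0<..}" for x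
      using that by (auto intro!: derivative_eq_intros)
    have "0 \<le> p * (p - 1)"
      using assms(1) by (auto simp: zero_le_mult_iff)
    then show "0 \<le> p * (p - 1) * x powr (p - 2)" for x
      by simp
  qed (use assms in auto)
  then show ?thesis
    by simp
qed

lemma powr_le_tangent:
  fixes b y z :: real
  assumes "0 < b" "b < 1" "z > 0" "y \<ge> 0"
  shows "y powr b \<le> z powr b + b * z powr (b - 1) * (y - z)"
proof (cases "y = 0")
  case True
  have "z powr (b - 1) * z = z powr b"
    using assms by (simp add: powr_diff)
  then have "z powr b + b * z powr (b - 1) * (0 - z) = (1 - b) * z powr b"
    by (simp add: algebra_simps)
  then show ?thesis
    using True assms by simp
next
  case False
  have "- (b * z powr (b - 1)) * (y - z) \<le> - (y powr b) - - (z powr b)"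
  proof (rule f''_imp_f'[where C = "{0<..}" and f'' = "\<lambda>x. - (b * (b - 1) * x powr (b - 2))"])
    show "DERIV (\<lambda>x. - (x powr b)) x :> - (b * x powr (b - 1))" if "x \<in> {0<..}" for x
      using that by (intro DERIV_minus has_real_derivative_powr) auto
    show "DERIV (\<lambda>x. - (b * x powr (b - 1))) x :> - (b * (b - 1) * x powr (b - 2))"
      if "x \<in> {0<..}" for x
      using that by (auto intro!: derivative_eq_intros)
    have "b * (b - 1) \<le> 0"
      using assms by (auto simp: mult_le_0_iff)
    then show "0 \<le> - (b * (b - 1) * x powr (b - 2))" for x
      by (simp add: mult_nonneg_nonpos2)
  qed (use assms False in auto)
  then show ?thesis
    by simp
qed

text \<open>The mean value of \<open>z powr (b - 1)\<close> over \<open>{w..u}\<close>.\<close>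

definition powr_avg :: "real \<Rightarrow> real \<Rightarrow> real \<Rightarrow> real" where
  "powr_avg b w u = (u powr b - w powr b) / (b * (u - w))"

context
  fixes b :: real
  assumes b: "0 < b" "b < 1"
begin

lemma powr_avg_ge_right:
  assumes "0 \<le> w" "w < u"
  shows "u powr (b - 1) \<le> powr_avg b w u"
proof -
  have "w powr b \<le> u powr b + b * u powr (b - 1) * (w - u)"
    using powr_le_tangent[OF b, of u w] assms by simp
  then have "u powr (b - 1) * (b * (u - w)) \<le> u powr b - w powr b"
    by (simp add: algebra_simps)
  then show ?thesis
    using b assms by (simp add: powr_avg_def pos_le_divide_eq)
qed

lemma powr_avg_le_left:
  assumes "0 < w" "w < u"
  shows "powr_avg b w u \<le> w powr (b - 1)"
proof -
  have "u powr b \<le> w powr b + b * w powr (b - 1) * (u - w)"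
    using powr_le_tangent[OF b, of w u] assms by simp
  then have "u powr b - w powr b \<le> w powr (b - 1) * (b * (u - w))"
    by (simp add: algebra_simps)
  then show ?thesis
    using b assms by (simp add: powr_avg_def pos_divide_le_eq)
qed

lemma powr_avg_pos:
  assumes "0 \<le> w" "w < u"
  shows "0 < powr_avg b w u"
  using powr_avg_ge_right[OF assms] assms by (smt (verit) powr_gt_zero)

lemma powr_avg_antimono_left:
  assumes "0 \<le> w" "w \<le> y" "y < u"
  shows "powr_avg b y u \<le> powr_avg b w u"
proof (cases "y = 0")
  case True
  then show ?thesis
    using assms by simp
next
  case False
  then have y: "y > 0"
    using assms by simp
  have "u powr b \<le> y powr b + b * y powr (b - 1) * (u - y)"
    and "w powr b \<le> y powr b + b * y powr (b - 1) * (w - y)"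
    using powr_le_tangent[OF b y] assms by auto
  then have "u powr b * (y - w) \<le> (y powr b + b * y powr (b - 1) * (u - y)) * (y - w)"
    and "w powr b * (u - y) \<le> (y powr b + b * y powr (b - 1) * (w - y)) * (u - y)"
    using assms by (auto intro!: mult_right_mono)
  then have "(u powr b - y powr b) * (u - w) \<le> (u powr b - w powr b) * (u - y)"
    by (simp add: algebra_simps)
  then have "(u powr b - y powr b) / (u - y) \<le> (u powr b - w powr b) / (u - w)"
    using assms by (simp add: field_simps)
  from divide_right_mono[OF this, of b] b show ?thesis
    unfolding powr_avg_def by (simp add: mult.commute)
qed

lemma powr_avg_trapezoid:
  assumes "0 < w" "w < u"
  shows "2 * powr_avg b w u \<le> w powr (b - 1) + u powr (b - 1)"
proof -
  define f where "f z = b * (z - w) * (z powr (b - 1) + w powr (b - 1)) - 2 * (z powr b - w powr b)"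
    for z
  have "f w \<le> f u"
  proof (rule DERIV_nonneg_imp_increasing_open[of w u f])
    fix z
    assume z: "w < z" "z < u"
    have "(f has_real_derivative
        b * (w powr (b - 1) - (z powr (b - 1) + (b - 1) * z powr (b - 2) * (w - z)))) (at z)"
      unfolding f_def using z assms
      by (auto intro!: derivative_eq_intros simp: algebra_simps)
    moreover have "z powr (b - 1) + (b - 1) * z powr (b - 2) * (w - z) \<le> w powr (b - 1)"
      using powr_ge_tangent[of "b - 1" z w] b z assms by (simp add: diff_diff_eq)
    ultimately show "\<exists>y. DERIV f z :> y \<and> y \<ge> 0"
      using b by (intro exI conjI) auto
  next
    show "continuous_on {w..u} f"
      unfolding f_def using assms by (intro continuous_intros) auto
  qed (use assms in simp)
  then have "2 * (u powr b - w powr b) \<le> (w powr (b - 1) + u powr (b - 1)) * (b * (u - w))"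
    by (simp add: f_def algebra_simps)
  then show ?thesis
    using b assms by (simp add: powr_avg_def pos_divide_le_eq)
qed

lemma powr_avg_le_next:
  assumes "0 \<le> w'" "w' < w" "w < u"
  shows "powr_avg b w u \<le> powr_avg b w' w"
  using powr_avg_le_left[of w u] powr_avg_ge_right[of w' w] assms by simp

lemma powr_avg_excess_le:
  assumes "0 \<le> w'" "w' < w" "w < u"
  shows "powr_avg b w u - u powr (b - 1) \<le> powr_avg b w' w - powr_avg b w u"
  using powr_avg_trapezoid[of w u] powr_avg_ge_right[of w' w] assms by simp

lemma powr_diff_eq_powr_avg:
  "(u powr b - y powr b) / b = powr_avg b y u * (u - y)"
  using b by (cases "y = u") (simp_all add: powr_avg_def)

lemma powr_secant_defect_le:
  assumes "0 \<le> w" "w \<le> y" "y \<le> u" "w < u"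
  shows "\<bar>(u powr b - y powr b) / b - powr_avg b w u * (u - y)\<bar>
    \<le> (powr_avg b w u - u powr (b - 1)) * (u - y)"
proof (cases "y = u")
  case False
  then have "u powr (b - 1) \<le> powr_avg b y u" "powr_avg b y u \<le> powr_avg b w u"
    using powr_avg_ge_right[of y u] powr_avg_antimono_left[of w y u] assms by auto
  moreover have "(u powr b - y powr b) / b - powr_avg b w u * (u - y)
      = (powr_avg b y u - powr_avg b w u) * (u - y)"
    by (simp add: powr_diff_eq_powr_avg algebra_simps)
  ultimately show ?thesis
    using assms by (simp add: abs_mult abs_le_iff mult_right_mono)
qed simp

end

section \<open>Averages of the Caputo kernel\<close>

definition kernel_avg :: "real \<Rightarrow> real \<Rightarrow> real \<Rightarrow> real \<Rightarrow> real" where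
  "kernel_avg \<alpha> X lo hi = integral {lo..hi} (\<lambda>s. omega (1 - \<alpha>) (X - s)) / (hi - lo)"

text \<open>The integral of \<open>omega (1 - \<alpha>) (X - r) - kernel_avg \<alpha> X lo hi\<close> over \<open>r \<in> {lo..s}\<close>.\<close>

definition kernel_defect :: "real \<Rightarrow> real \<Rightarrow> real \<Rightarrow> real \<Rightarrow> real \<Rightarrow> real" where
  "kernel_defect \<alpha> X lo hi s = ((X - lo) powr (1 - \<alpha>) - (X - s) powr (1 - \<alpha>)) / ((1 - \<alpha>) * Gamma (1 - \<alpha>))
    - kernel_avg \<alpha> X lo hi * (s - lo)"

context
  fixes \<alpha> :: real
  assumes \<alpha>: "0 < \<alpha>" "\<alpha> < 1"
begin

lemma omega_kernel_has_integral:
  assumes "lo \<le> hi" "hi \<le> X"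
  shows "((\<lambda>s. omega (1 - \<alpha>) (X - s)) has_integral
    ((X - lo) powr (1 - \<alpha>) - (X - hi) powr (1 - \<alpha>)) / ((1 - \<alpha>) * Gamma (1 - \<alpha>))) {lo..hi}"
proof -
  define K where "K = (1 - \<alpha>) * Gamma (1 - \<alpha>)"
  have K: "K > 0"
    using \<alpha> by (simp add: K_def)
  define \<Psi> where "\<Psi> s = - ((X - s) powr (1 - \<alpha>)) / K" for s
  have "((\<lambda>s. omega (1 - \<alpha>) (X - s)) has_integral (\<Psi> hi - \<Psi> lo)) {lo..hi}"
  proof (rule fundamental_theorem_of_calculus_interior_strong[where S = "{}"])
    have "continuous_on {lo..hi} (\<lambda>s. (X - s) powr (1 - \<alpha>))"
      by (rule continuous_on_powr') (use assms \<alpha> in \<open>auto intro!: continuous_intros\<close>)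
    then show "continuous_on {lo..hi} \<Psi>"
      unfolding \<Psi>_def using K by (auto intro!: continuous_intros)
    show "(\<Psi> has_vector_derivative omega (1 - \<alpha>) (X - s)) (at s)" if "s \<in> {lo<..<hi} - {}" for s
    proof -
      have "X - s > 0"
        using that assms by auto
      then have "(\<Psi> has_real_derivative (1 - \<alpha>) * (X - s) powr (1 - \<alpha> - 1) / K) (at s)"
        unfolding \<Psi>_def using K by (auto intro!: derivative_eq_intros)
      moreover have "(1 - \<alpha>) * (X - s) powr (1 - \<alpha> - 1) / K = omega (1 - \<alpha>) (X - s)"
        using \<alpha> by (simp add: K_def omega_def)
      ultimately show ?thesis
        by (simp add: has_real_derivative_iff_has_vector_derivative)
    qed
  qed (use assms in auto)
  moreover have "\<Psi> hi - \<Psi> lo = ((X - lo) powr (1 - \<alpha>) - (X - hi) powr (1 - \<alpha>)) / K"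
    by (simp add: \<Psi>_def diff_divide_distrib)
  ultimately show ?thesis
    by (simp add: K_def)
qed

lemma kernel_avg_eq_powr_avg:
  assumes "lo < hi" "hi \<le> X"
  shows "kernel_avg \<alpha> X lo hi = powr_avg (1 - \<alpha>) (X - hi) (X - lo) / Gamma (1 - \<alpha>)"
  using integral_unique[OF omega_kernel_has_integral[of lo hi X]] assms
  by (simp add: kernel_avg_def powr_avg_def field_simps)

lemma kernel_avg_pos:
  assumes "lo < hi" "hi \<le> X"
  shows "0 < kernel_avg \<alpha> X lo hi"
  using powr_avg_pos[of "1 - \<alpha>" "X - hi" "X - lo"] \<alpha> assms
  by (simp add: kernel_avg_eq_powr_avg)

lemma kernel_avg_le_next:
  assumes "lo < hi" "hi < hi'" "hi' \<le> X"
  shows "kernel_avg \<alpha> X lo hi \<le> kernel_avg \<alpha> X hi hi'"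
  using powr_avg_le_next[of "1 - \<alpha>" "X - hi'" "X - hi" "X - lo"] \<alpha> assms
  by (simp add: kernel_avg_eq_powr_avg divide_right_mono)

lemma kernel_avg_excess_le:
  assumes "lo < hi" "hi < hi'" "hi' \<le> X"
  shows "kernel_avg \<alpha> X lo hi - omega (1 - \<alpha>) (X - lo)
    \<le> kernel_avg \<alpha> X hi hi' - kernel_avg \<alpha> X lo hi"
proof -
  have "powr_avg (1 - \<alpha>) (X - hi) (X - lo) - (X - lo) powr (1 - \<alpha> - 1)
      \<le> powr_avg (1 - \<alpha>) (X - hi') (X - hi) - powr_avg (1 - \<alpha>) (X - hi) (X - lo)"
    using powr_avg_excess_le[of "1 - \<alpha>" "X - hi'" "X - hi" "X - lo"] \<alpha> assms by simp
  from divide_right_mono[OF this, of "Gamma (1 - \<alpha>)"] show ?thesis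
    using \<alpha> assms by (simp add: kernel_avg_eq_powr_avg omega_def diff_divide_distrib)
qed

lemma kernel_defect_hi:
  assumes "lo < hi" "hi \<le> X"
  shows "kernel_defect \<alpha> X lo hi hi = 0"
  using integral_unique[OF omega_kernel_has_integral[of lo hi X]] assms
  by (simp add: kernel_defect_def kernel_avg_def)

lemma continuous_on_kernel_defect:
  assumes "hi \<le> X"
  shows "continuous_on {lo..hi} (kernel_defect \<alpha> X lo hi)"
proof -
  have "continuous_on {lo..hi} (\<lambda>s. (X - s) powr (1 - \<alpha>))"
    by (rule continuous_on_powr') (use assms \<alpha> in \<open>auto intro!: continuous_intros\<close>)
  then show ?thesis
    unfolding kernel_defect_def using \<alpha> Gamma_real_pos[of "1 - \<alpha>", THEN less_imp_neq]
    by (intro continuous_on_diff continuous_on_divide[OF continuous_on_diff[OF continuous_on_const]]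
        continuous_on_mult continuous_on_const continuous_on_id) auto
qed

lemma kernel_defect_has_derivative:
  assumes "s < X"
  shows "(kernel_defect \<alpha> X lo hi has_real_derivative omega (1 - \<alpha>) (X - s) - kernel_avg \<alpha> X lo hi) (at s)"
proof -
  have "(kernel_defect \<alpha> X lo hi has_real_derivative
      (1 - \<alpha>) * (X - s) powr (1 - \<alpha> - 1) / ((1 - \<alpha>) * Gamma (1 - \<alpha>)) - kernel_avg \<alpha> X lo hi) (at s)"
    unfolding kernel_defect_def using assms \<alpha> Gamma_real_pos[of "1 - \<alpha>", THEN less_imp_neq]
    by (auto intro!: derivative_eq_intros)
  then show ?thesis
    using \<alpha> by (simp add: omega_def)
qed

lemma abs_kernel_defect_le:
  assumes "lo \<le> s" "s \<le> hi" "lo < hi" "hi \<le> X"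
  shows "\<bar>kernel_defect \<alpha> X lo hi s\<bar> \<le> (kernel_avg \<alpha> X lo hi - omega (1 - \<alpha>) (X - lo)) * (s - lo)"
proof -
  define b G where "b = 1 - \<alpha>" and "G = Gamma b"
  have b: "0 < b" "b < 1" and G: "G > 0"
    using \<alpha> by (simp_all add: b_def G_def)
  have A: "kernel_avg \<alpha> X lo hi = powr_avg b (X - hi) (X - lo) / G"
    using kernel_avg_eq_powr_avg assms by (simp add: b_def G_def)
  have "\<bar>((X - lo) powr b - (X - s) powr b) / b - powr_avg b (X - hi) (X - lo) * ((X - lo) - (X - s))\<bar>
      \<le> (powr_avg b (X - hi) (X - lo) - (X - lo) powr (b - 1)) * ((X - lo) - (X - s))"
    using powr_secant_defect_le[OF b, of "X - hi" "X - s" "X - lo"] assms by simp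
  moreover have "kernel_defect \<alpha> X lo hi s = (((X - lo) powr b - (X - s) powr b) / b
      - powr_avg b (X - hi) (X - lo) * ((X - lo) - (X - s))) / G"
    using b G by (simp add: kernel_defect_def A field_simps flip: b_def G_def)
  moreover have "kernel_avg \<alpha> X lo hi - omega (1 - \<alpha>) (X - lo)
      = (powr_avg b (X - hi) (X - lo) - (X - lo) powr (b - 1)) / G"
    by (simp add: A omega_def b_def G_def diff_divide_distrib)
  ultimately show ?thesis
    using G by (simp add: abs_div divide_right_mono)
qed

end

section \<open>Integration by parts against a vanishing weight\<close>

lemma continuous_on_vanishing_weight_mult:
  fixes W f :: "real \<Rightarrow> real"
  assumes "lo < hi"
    and W_cont: "continuous_on {lo..hi} W" and W_lo: "W lo = 0"
    and W_le: "\<And>s. lo \<le> s \<Longrightarrow> s \<le> hi \<Longrightarrow> \<bar>W s\<bar> \<le> c * (s - lo)"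
    and f_cont: "\<And>s. lo < s \<Longrightarrow> s < hi \<Longrightarrow> isCont f s"
    and f_hi: "(f \<longlongrightarrow> f hi) (at_left hi)"
    and f_lo: "((\<lambda>s. (s - lo) * f s) \<longlongrightarrow> 0) (at_right lo)"
  shows "continuous_on {lo..hi} (\<lambda>s. W s * f s)"
proof (rule continuous_on_IccI[OF _ _ _ \<open>lo < hi\<close>])
  have "((\<lambda>s. c * \<bar>(s - lo) * f s\<bar>) \<longlongrightarrow> 0) (at_right lo)"
    using tendsto_mult_right_zero[OF tendsto_rabs_zero[OF f_lo]] .
  moreover have "\<forall>\<^sub>F s in at_right lo. norm (W s * f s) \<le> c * \<bar>(s - lo) * f s\<bar>"
    using eventually_at_right_real[OF \<open>lo < hi\<close>]
  proof eventually_elim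
    case (elim s)
    then show ?case
      using mult_right_mono[OF W_le abs_ge_zero[of "f s"], of s] by (simp add: abs_mult)
  qed
  ultimately show "((\<lambda>s. W s * f s) \<longlongrightarrow> W lo * f lo) (at_right lo)"
    by (simp add: W_lo Lim_null_comparison)
  show "((\<lambda>s. W s * f s) \<longlongrightarrow> W hi * f hi) (at_left hi)"
    using continuous_on_Icc_at_leftD[OF W_cont \<open>lo < hi\<close>] f_hi by (rule tendsto_mult)
  show "(\<lambda>s. W s * f s) \<midarrow>s\<rightarrow> W s * f s" if "lo < s" "s < hi" for s
    using continuous_on_interior[OF W_cont, of s] f_cont[OF that] that
    unfolding isCont_def by (intro tendsto_mult) auto
qed

text \<open>The hypotheses allow \<open>f\<close> to blow up at \<open>lo\<close> like \<open>o(1 / (s - lo))\<close>.\<close>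

lemma by_parts_vanishing_weight:
  fixes W w f f' :: "real \<Rightarrow> real"
  assumes "lo < hi"
    and W_cont: "continuous_on {lo..hi} W" and W_lo: "W lo = 0" and W_hi: "W hi = 0"
    and W_deriv: "\<And>s. lo < s \<Longrightarrow> s < hi \<Longrightarrow> (W has_real_derivative w s) (at s)"
    and W_le: "\<And>s. lo \<le> s \<Longrightarrow> s \<le> hi \<Longrightarrow> \<bar>W s\<bar> \<le> c * (s - lo)"
    and f_deriv: "\<And>s. lo < s \<Longrightarrow> s < hi \<Longrightarrow> (f has_real_derivative f' s) (at s)"
    and f_hi: "(f \<longlongrightarrow> f hi) (at_left hi)"
    and f_lo: "((\<lambda>s. (s - lo) * f s) \<longlongrightarrow> 0) (at_right lo)"
    and f'_cont: "continuous_on {lo<..<hi} f'"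
    and f'_int: "(\<lambda>s. (s - lo) * \<bar>f' s\<bar>) integrable_on {lo..hi}"
  shows "(\<lambda>s. w s * f s) integrable_on {lo..hi}"
    and "\<bar>integral {lo..hi} (\<lambda>s. w s * f s)\<bar> \<le> c * integral {lo..hi} (\<lambda>s. (s - lo) * \<bar>f' s\<bar>)"
proof -
  have Wf'_le: "norm (W s * f' s) \<le> c * ((s - lo) * \<bar>f' s\<bar>)" if "s \<in> {lo..hi}" for s
    using that mult_right_mono[OF W_le abs_ge_zero[of "f' s"], of s] by (simp add: abs_mult)
  have bound_int: "(\<lambda>s. c * ((s - lo) * \<bar>f' s\<bar>)) integrable_on {lo..hi}"
    using integrable_on_cmult_left[OF f'_int, of c] by simp
  have "continuous_on {lo..hi} (\<lambda>s. W s * f s)"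
    using \<open>lo < hi\<close> W_cont W_lo W_le DERIV_isCont[OF f_deriv] f_hi f_lo
    by (rule continuous_on_vanishing_weight_mult)
  moreover have "((\<lambda>s. W s * f s) has_vector_derivative w s * f s + W s * f' s) (at s)"
    if "lo < s" "s < hi" for s
    using DERIV_mult[OF W_deriv[OF that] f_deriv[OF that]]
    by (simp add: has_real_derivative_iff_has_vector_derivative mult.commute)
  ultimately have "((\<lambda>s. w s * f s + W s * f' s) has_integral (W hi * f hi - W lo * f lo)) {lo..hi}"
    using \<open>lo < hi\<close> by (intro fundamental_theorem_of_calculus_interior_strong[where S = "{}"]) auto
  then have by_parts: "((\<lambda>s. w s * f s + W s * f' s) has_integral 0) {lo..hi}"
    by (simp add: W_lo W_hi)
  have "(\<lambda>s. W s * f' s) absolutely_integrable_on {lo..hi}"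
    unfolding absolutely_integrable_on_Icc_iff_Ioo
  proof (rule measurable_bounded_by_integrable_imp_absolutely_integrable)
    have "continuous_on {lo<..<hi} W"
      by (rule continuous_on_subset[OF W_cont]) auto
    then have "continuous_on {lo<..<hi} (\<lambda>s. W s * f' s)"
      using f'_cont by (rule continuous_on_mult)
    then show "(\<lambda>s. W s * f' s) \<in> borel_measurable (lebesgue_on {lo<..<hi})"
      by (rule continuous_imp_measurable_on_sets_lebesgue) simp
    show "(\<lambda>s. c * ((s - lo) * \<bar>f' s\<bar>)) integrable_on {lo<..<hi}"
      using bound_int by (simp add: integrable_on_Icc_iff_Ioo[symmetric])
  qed (use Wf'_le in auto)
  then have Wf'_int: "(\<lambda>s. W s * f' s) integrable_on {lo..hi}"
    by (simp add: absolutely_integrable_on_def)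
  have "((\<lambda>s. w s * f s) has_integral - integral {lo..hi} (\<lambda>s. W s * f' s)) {lo..hi}"
    using has_integral_diff[OF by_parts integrable_integral[OF Wf'_int]] by simp
  then show "(\<lambda>s. w s * f s) integrable_on {lo..hi}"
    and "\<bar>integral {lo..hi} (\<lambda>s. w s * f s)\<bar> \<le> c * integral {lo..hi} (\<lambda>s. (s - lo) * \<bar>f' s\<bar>)"
    using integral_norm_bound_integral[OF Wf'_int bound_int Wf'_le]
    by (auto simp: integral_unique has_integral_integrable)
qed

lemma has_integral_sum_consecutive:
  fixes x :: "nat \<Rightarrow> real" and f :: "real \<Rightarrow> 'a::banach"
  assumes "mono_on {..n} x"
    and "\<And>m. 1 \<le> m \<Longrightarrow> m \<le> n \<Longrightarrow> f integrable_on {x (m - 1)..x m}"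
  shows "(f has_integral (\<Sum>m=1..n. integral {x (m - 1)..x m} f)) {x 0..x n}"
  using assms
proof (induction n)
  case 0
  then show ?case
    by (simp add: has_integral_refl)
next
  case (Suc n)
  have "mono_on {..n} x"
    using Suc.prems(1) by (rule mono_on_subset) auto
  then have IH: "(f has_integral (\<Sum>m=1..n. integral {x (m - 1)..x m} f)) {x 0..x n}"
    using Suc by simp
  have mono: "x 0 \<le> x n" "x n \<le> x (Suc n)"
    using Suc.prems(1) by (auto intro: mono_onD)
  have "(f has_integral integral {x n..x (Suc n)} f) {x n..x (Suc n)}"
    using Suc.prems(2)[of "Suc n"] by (simp add: integrable_integral)
  from has_integral_combine[OF mono IH this] show ?case
    by simp
qed

lemma has_real_derivative_at_interior:
  assumes "(f has_real_derivative D) (at x within {a<..b})" "a < x" "x < b"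
  shows "(f has_real_derivative D) (at x)"
proof -
  have "(f has_real_derivative D) (at x within {a<..<b})"
    using assms(1) by (rule has_field_derivative_subset) auto
  moreover have "at x within {a<..<b} = at x"
    using assms by (intro at_within_open) auto
  ultimately show ?thesis
    by simp
qed

lemma mesh_less:
  fixes t :: "nat \<Rightarrow> real"
  assumes "\<forall>i<N. t i < t (Suc i)" "i < k" "k \<le> N"
  shows "t i < t k"
  by (rule lift_Suc_mono_less_ivl[of "{..<N}"]) (use assms in auto)

lemma thalf_diff:
  assumes "1 \<le> k"
  shows "thalf t k - thalf t (k - 1) = tauhalf t k"
proof -
  obtain i where "k = Suc i"
    using assms by (cases k) auto
  then show ?thesis
    by (cases i) (simp_all add: thalf_def tauhalf_def tau_def field_simps)
qed

context
  fixes t :: "nat \<Rightarrow> real" and N :: nat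
  assumes t_mono: "\<forall>i<N. t i < t (Suc i)"
begin

lemma thalf_between:
  assumes "1 \<le> k" "k \<le> N"
  shows "t (k - 1) < thalf t k" "thalf t k < t k"
  using mesh_less[OF t_mono, of "k - 1" k] assms by (auto simp: thalf_def tau_def field_simps)

lemma thalf_less:
  assumes "i < k" "k \<le> N"
  shows "thalf t i < thalf t k"
proof -
  have "thalf t i \<le> t i"
    using thalf_between(2)[of i] assms by (cases "i = 0") (auto simp: thalf_def)
  also have "t i \<le> t (k - 1)"
    using assms by (cases "i = k - 1") (auto intro!: less_imp_le mesh_less[OF t_mono])
  also have "t (k - 1) < thalf t k"
    using thalf_between(1)[of k] assms by simp
  finally show ?thesis .
qed

lemma thalf_le:
  assumes "i \<le> k" "k \<le> N"
  shows "thalf t i \<le> thalf t k"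
  using thalf_less[of i k] assms by (cases "i = k") auto

lemma mono_on_thalf: "mono_on {..N} (thalf t)"
  by (rule mono_onI) (simp add: thalf_le)

lemma thalf_less_last:
  assumes "1 \<le> N" "k \<le> N"
  shows "thalf t k < t N"
  using thalf_less[of k N] thalf_between(2)[of N] assms by (cases "k = N") auto

end

lemma acoef_eq_kernel_avg:
  "1 \<le> m \<Longrightarrow> acoef \<alpha> t j m = kernel_avg \<alpha> (thalf t j) (thalf t (m - 1)) (thalf t m)"
  using thalf_diff[of m t] by (simp add: acoef_def kernel_avg_def)

context
  fixes \<alpha> :: real and t :: "nat \<Rightarrow> real" and N :: nat
  assumes \<alpha>: "0 < \<alpha>" "\<alpha> < 1" and t_mono: "\<forall>i<N. t i < t (Suc i)"
begin

lemma acoef_pos: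
  assumes "1 \<le> m" "m \<le> j" "j \<le> N"
  shows "0 < acoef \<alpha> t j m"
  using kernel_avg_pos[OF \<alpha> thalf_less[OF t_mono, of "m - 1" m] thalf_le[OF t_mono, of m j]] assms
  by (simp add: acoef_eq_kernel_avg)

lemma acoef_le_next:
  assumes "1 \<le> k" "k < j" "j \<le> N"
  shows "acoef \<alpha> t j k \<le> acoef \<alpha> t j (k + 1)"
  using kernel_avg_le_next[OF \<alpha> thalf_less[OF t_mono, of "k - 1" k] thalf_less[OF t_mono, of k "k + 1"]
      thalf_le[OF t_mono, of "k + 1" j]] assms
  by (simp add: acoef_eq_kernel_avg)

lemma acoef_excess_le:
  assumes "1 \<le> k" "k < j" "j \<le> N"
  shows "acoef \<alpha> t j k - omega (1 - \<alpha>) (thalf t j - thalf t (k - 1))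
    \<le> acoef \<alpha> t j (k + 1) - acoef \<alpha> t j k"
  using kernel_avg_excess_le[OF \<alpha> thalf_less[OF t_mono, of "k - 1" k] thalf_less[OF t_mono, of k "k + 1"]
      thalf_le[OF t_mono, of "k + 1" j]] assms
  by (simp add: acoef_eq_kernel_avg)

end

section \<open>Discrete complementary convolution kernels\<close>

declare dcc_aux.simps [simp del]

lemma sum_triangle_swap:
  fixes F :: "nat \<Rightarrow> nat \<Rightarrow> 'a::comm_monoid_add" and n :: nat
  shows "(\<Sum>j=1..n. \<Sum>m=1..j. F j m) = (\<Sum>m=1..n. \<Sum>j=m..n. F j m)"
  by (induction n) (auto simp: sum.distrib sum.cl_ivl_Suc)

context
  fixes A :: "nat \<Rightarrow> nat \<Rightarrow> real" and n :: nat
  assumes diag_pos: "\<And>k. 1 \<le> k \<Longrightarrow> k \<le> n \<Longrightarrow> 0 < A k k"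
    and incr: "\<And>k j. 1 \<le> k \<Longrightarrow> k < j \<Longrightarrow> j \<le> n \<Longrightarrow> A j k \<le> A j (k + 1)"
begin

lemma dcc_aux_nonneg: "1 \<le> k \<Longrightarrow> k \<le> n \<Longrightarrow> 0 \<le> dcc_aux A n k"
proof (induction "n - k" arbitrary: k rule: less_induct)
  case less
  show ?case
  proof (cases "n \<le> k")
    case True
    then show ?thesis
      using diag_pos[of n] less.prems by (simp add: dcc_aux.simps)
  next
    case False
    have "0 \<le> (A j (k + 1) - A j k) * dcc_aux A n j" if "j \<in> {k+1..n}" for j
    proof -
      have "0 \<le> dcc_aux A n j"
        using less.hyps[of j] less.prems that by auto
      then show ?thesis
        using incr[of k j] less.prems that by simp
    qed
    then have "0 \<le> (\<Sum>j=k+1..n. (A j (k + 1) - A j k) * dcc_aux A n j)"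
      by (rule sum_nonneg)
    then show ?thesis
      using False diag_pos[of k] less.prems by (subst dcc_aux.simps) simp
  qed
qed

lemma dcc_aux_column_sum_le:
  assumes "1 \<le> m" "m \<le> n"
  shows "(\<Sum>j=m..n. dcc_aux A n j * (if m = j then A j j else A j (m + 1) - A j m))
    \<le> 2 * (dcc_aux A n m * A m m)"
proof -
  have "(\<Sum>j=m+1..n. dcc_aux A n j * (A j (m + 1) - A j m)) \<le> dcc_aux A n m * A m m"
    \<comment> \<open>for \<open>m < n\<close> this is the defining recursion of \<open>dcc_aux\<close>, with equality\<close>
  proof (cases "m < n")
    case True
    then show ?thesis
      using diag_pos[of m] assms
      by (subst (2) dcc_aux.simps) (simp add: mult.commute)
  next
    case False
    then show ?thesis
      using dcc_aux_nonneg[of m] diag_pos[of m] assms by simp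
  qed
  moreover have "{m..n} = insert m {m+1..n}"
    using assms by auto
  ultimately show ?thesis
    by (simp add: mult.commute)
qed

lemma dcc_aux_weighted_sum_le:
  fixes E R :: "nat \<Rightarrow> real"
  assumes E_nonneg: "\<And>m. 1 \<le> m \<Longrightarrow> m \<le> n \<Longrightarrow> 0 \<le> E m"
    and R_le: "\<And>j. 1 \<le> j \<Longrightarrow> j \<le> n \<Longrightarrow>
      \<bar>R j\<bar> \<le> (\<Sum>m=1..j. (if m = j then A j j else A j (m + 1) - A j m) * E m)"
  shows "(\<Sum>j=1..n. dcc_aux A n j * \<bar>R j\<bar>) \<le> 2 * (\<Sum>j=1..n. dcc_aux A n j * A j j * E j)"
proof -
  let ?p = "dcc_aux A n" and ?c = "\<lambda>j m. if m = j then A j j else A j (m + 1) - A j m"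
  have "(\<Sum>j=1..n. ?p j * \<bar>R j\<bar>) \<le> (\<Sum>j=1..n. ?p j * (\<Sum>m=1..j. ?c j m * E m))"
    using R_le dcc_aux_nonneg by (intro sum_mono mult_left_mono) auto
  also have "\<dots> = (\<Sum>j=1..n. \<Sum>m=1..j. ?p j * ?c j m * E m)"
    by (simp add: sum_distrib_left mult.assoc)
  also have "\<dots> = (\<Sum>m=1..n. \<Sum>j=m..n. ?p j * ?c j m * E m)"
    by (rule sum_triangle_swap)
  also have "\<dots> = (\<Sum>m=1..n. E m * (\<Sum>j=m..n. ?p j * ?c j m))"
    by (simp add: sum_distrib_left mult.commute mult.left_commute)
  also have "\<dots> \<le> (\<Sum>m=1..n. E m * (2 * (?p m * A m m)))"
    using dcc_aux_column_sum_le E_nonneg by (intro sum_mono mult_left_mono) auto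
  also have "\<dots> = 2 * (\<Sum>j=1..n. ?p j * A j j * E j)"
    by (simp add: sum_distrib_left mult.commute mult.left_commute)
  finally show ?thesis .
qed

end

section \<open>The local consistency error\<close>

locale weighted_C2 =
  fixes T :: real and v v' v'' :: "real \<Rightarrow> real"
  assumes T_pos: "T > 0"
    and v_cont: "continuous_on {0..T} v"
    and v_d1: "\<forall>x\<in>{0<..T}. (v has_real_derivative v' x) (at x within {0<..T})"
    and v_d2: "\<forall>x\<in>{0<..T}. (v' has_real_derivative v'' x) (at x within {0<..T})"
    and v''_cont: "continuous_on {0<..T} v''"
    and v''_int: "(\<lambda>x. x * \<bar>v'' x\<bar>) integrable_on {0..T}"
begin

lemma v_deriv_at:
  assumes "0 < s" "s < T"
  shows "(v has_real_derivative v' s) (at s)"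
  using has_real_derivative_at_interior[of v "v' s" s 0 T] v_d1 assms by simp

lemma v'_deriv_at:
  assumes "0 < s" "s < T"
  shows "(v' has_real_derivative v'' s) (at s)"
  using has_real_derivative_at_interior[of v' "v'' s" s 0 T] v_d2 assms by simp

lemma continuous_on_v'':
  assumes "0 < lo" "hi \<le> T"
  shows "continuous_on {lo..hi} v''"
  by (rule continuous_on_subset[OF v''_cont]) (use assms in auto)

lemma weight_integrable:
  assumes "0 \<le> lo" "hi \<le> T"
  shows "(\<lambda>s. (s - lo) * \<bar>v'' s\<bar>) integrable_on {lo..hi}"
proof (cases "lo = 0")
  case True
  then show ?thesis
    using integrable_subinterval_real[OF v''_int, of lo hi] assms by simp
next
  case False
  then show ?thesis
    using continuous_on_v''[of lo hi] assms
    by (intro integrable_continuous_interval continuous_intros) auto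
qed

lemma abs_v'_le:
  assumes "0 < s" "s \<le> T"
  shows "\<bar>v' s\<bar> \<le> \<bar>v' T\<bar> + integral {s..T} (\<lambda>u. \<bar>v'' u\<bar>)"
proof -
  have "(v'' has_integral (v' T - v' s)) {s..T}"
  proof (rule fundamental_theorem_of_calculus)
    show "(v' has_vector_derivative v'' u) (at u within {s..T})" if "u \<in> {s..T}" for u
    proof -
      have "(v' has_real_derivative v'' u) (at u within {0<..T})"
        using v_d2 that assms by auto
      then have "(v' has_real_derivative v'' u) (at u within {s..T})"
        by (rule has_field_derivative_subset) (use assms in auto)
      then show ?thesis
        by (simp add: has_real_derivative_iff_has_vector_derivative)
    qed
  qed (use assms in auto)
  moreover have "norm (integral {s..T} v'') \<le> integral {s..T} (\<lambda>u. \<bar>v'' u\<bar>)"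
    using continuous_on_v''[OF assms(1) order_refl]
    by (intro integral_norm_bound_integral integrable_continuous_interval continuous_intros) auto
  ultimately show ?thesis
    by (simp add: integral_unique)
qed

lemma mult_abs_v'_le:
  assumes "0 < s" "s \<le> \<delta>" "\<delta> \<le> T"
  shows "s * \<bar>v' s\<bar> \<le> s * (\<bar>v' T\<bar> + integral {\<delta>..T} (\<lambda>u. u * \<bar>v'' u\<bar>) / \<delta>)
    + integral {0..\<delta>} (\<lambda>u. u * \<bar>v'' u\<bar>)"
proof -
  have abs_int: "(\<lambda>u. \<bar>v'' u\<bar>) integrable_on {a..b}" if "s \<le> a" "b \<le> T" for a b
    using continuous_on_v''[of a b] that assms
    by (intro integrable_continuous_interval continuous_intros) auto
  have weight_int: "(\<lambda>u. u * \<bar>v'' u\<bar>) integrable_on {a..b}" if "0 \<le> a" "b \<le> T" for a b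
    using integrable_subinterval_real[OF v''_int, of a b] that by simp
  have "s * integral {s..\<delta>} (\<lambda>u. \<bar>v'' u\<bar>) = integral {s..\<delta>} (\<lambda>u. s * \<bar>v'' u\<bar>)"
    by simp
  also have "\<dots> \<le> integral {s..\<delta>} (\<lambda>u. u * \<bar>v'' u\<bar>)"
    using abs_int weight_int assms by (intro integral_le mult_right_mono) auto
  also have "\<dots> \<le> integral {0..\<delta>} (\<lambda>u. u * \<bar>v'' u\<bar>)"
    using weight_int assms by (intro integral_subset_le) auto
  finally have near: "s * integral {s..\<delta>} (\<lambda>u. \<bar>v'' u\<bar>) \<le> integral {0..\<delta>} (\<lambda>u. u * \<bar>v'' u\<bar>)" .
  have "\<delta> * integral {\<delta>..T} (\<lambda>u. \<bar>v'' u\<bar>) = integral {\<delta>..T} (\<lambda>u. \<delta> * \<bar>v'' u\<bar>)"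
    by simp
  also have "\<dots> \<le> integral {\<delta>..T} (\<lambda>u. u * \<bar>v'' u\<bar>)"
    using abs_int weight_int assms by (intro integral_le mult_right_mono) auto
  finally have "s * integral {\<delta>..T} (\<lambda>u. \<bar>v'' u\<bar>) \<le> s * (integral {\<delta>..T} (\<lambda>u. u * \<bar>v'' u\<bar>) / \<delta>)"
    using assms by (intro mult_left_mono) (auto simp: field_simps)
  moreover have "integral {s..T} (\<lambda>u. \<bar>v'' u\<bar>)
      = integral {s..\<delta>} (\<lambda>u. \<bar>v'' u\<bar>) + integral {\<delta>..T} (\<lambda>u. \<bar>v'' u\<bar>)"
    using abs_int assms by (intro Henstock_Kurzweil_Integration.integral_combine[symmetric]) auto
  moreover have "s * \<bar>v' s\<bar> \<le> s * (\<bar>v' T\<bar> + integral {s..T} (\<lambda>u. \<bar>v'' u\<bar>))"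
    using abs_v'_le[of s] assms by (intro mult_left_mono) auto
  ultimately show ?thesis
    using near by (simp add: algebra_simps)
qed

lemma mult_v'_tendsto_0: "((\<lambda>s. s * v' s) \<longlongrightarrow> 0) (at_right 0)"
proof (rule tendstoI)
  fix e :: real
  assume "e > 0"
  define F where "F = (\<lambda>\<delta>. integral {0..\<delta>} (\<lambda>u. u * \<bar>v'' u\<bar>))"
  have "continuous_on {0..T} F"
    unfolding F_def using v''_int by (rule indefinite_integral_continuous_1)
  from continuous_on_Icc_at_rightD[OF this T_pos] have "(F \<longlongrightarrow> 0) (at_right 0)"
    by (simp add: F_def)
  then have "\<forall>\<^sub>F \<delta> in at_right 0. F \<delta> < e / 2"
    using \<open>e > 0\<close> by (intro order_tendstoD) auto
  moreover have "\<forall>\<^sub>F \<delta> in at_right 0. \<delta> \<in> {0<..<T}"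
    using eventually_at_right_real[OF T_pos] .
  ultimately have "\<forall>\<^sub>F \<delta> in at_right 0. F \<delta> < e / 2 \<and> \<delta> \<in> {0<..<T}"
    by eventually_elim auto
  then have "\<exists>\<delta>. F \<delta> < e / 2 \<and> \<delta> \<in> {0<..<T}"
    by (rule eventually_happens'[rotated]) (simp flip: trivial_limit_def)
  then obtain \<delta> where \<delta>: "0 < \<delta>" "\<delta> \<le> T" "F \<delta> < e / 2"
    by auto
  define C where "C = \<bar>v' T\<bar> + integral {\<delta>..T} (\<lambda>u. u * \<bar>v'' u\<bar>) / \<delta>"
  have "((\<lambda>s. s * C) \<longlongrightarrow> 0) (at_right 0)"
    by (intro tendsto_mult_left_zero tendsto_ident_at)
  then have "\<forall>\<^sub>F s in at_right 0. s * C < e / 2"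
    using \<open>e > 0\<close> by (intro order_tendstoD) auto
  moreover have "\<forall>\<^sub>F s in at_right 0. s \<in> {0<..<\<delta>}"
    using eventually_at_right_real[OF \<delta>(1)] .
  ultimately show "\<forall>\<^sub>F s in at_right 0. dist (s * v' s) 0 < e"
  proof eventually_elim
    case (elim s)
    then have "s * \<bar>v' s\<bar> \<le> s * C + F \<delta>"
      using mult_abs_v'_le[of s \<delta>] \<delta> by (simp add: F_def C_def)
    then show ?case
      using elim \<delta> by (simp add: abs_mult)
  qed
qed

lemma shifted_mult_v'_tendsto_0:
  assumes "0 \<le> lo" "lo < T"
  shows "((\<lambda>s. (s - lo) * v' s) \<longlongrightarrow> 0) (at_right lo)"
proof (cases "lo = 0")
  case True
  then show ?thesis
    using mult_v'_tendsto_0 by simp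
next
  case False
  then have "isCont v' lo"
    using assms by (intro DERIV_isCont[OF v'_deriv_at]) auto
  then have "(v' \<longlongrightarrow> v' lo) (at_right lo)"
    by (simp add: isCont_def filterlim_at_split)
  moreover have "((\<lambda>s. s - lo) \<longlongrightarrow> lo - lo) (at_right lo)"
    by (intro tendsto_intros)
  ultimately show ?thesis
    using tendsto_mult by fastforce
qed

lemma kernel_interval_error:
  assumes \<alpha>: "0 < \<alpha>" "\<alpha> < 1" and lohi: "0 \<le> lo" "lo < hi" "hi \<le> X" "hi < T"
  shows "(\<lambda>s. omega (1 - \<alpha>) (X - s) * v' s) integrable_on {lo..hi}"
    and "\<bar>integral {lo..hi} (\<lambda>s. omega (1 - \<alpha>) (X - s) * v' s) - kernel_avg \<alpha> X lo hi * (v hi - v lo)\<bar>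
      \<le> (kernel_avg \<alpha> X lo hi - omega (1 - \<alpha>) (X - lo)) * integral {lo..hi} (\<lambda>s. (s - lo) * \<bar>v'' s\<bar>)"
proof -
  define A where "A = kernel_avg \<alpha> X lo hi"
  have v'_hi: "(v' \<longlongrightarrow> v' hi) (at_left hi)"
    using DERIV_isCont[OF v'_deriv_at, of hi] lohi by (simp add: isCont_def filterlim_at_split)
  have v''_cont_Ioo: "continuous_on {lo<..<hi} v''"
    by (rule continuous_on_subset[OF v''_cont]) (use lohi in auto)
  note by_parts = by_parts_vanishing_weight[OF lohi(2) continuous_on_kernel_defect[OF \<alpha> lohi(3)] _
      kernel_defect_hi[OF \<alpha> lohi(2,3)] kernel_defect_has_derivative[OF \<alpha>] abs_kernel_defect_le[OF \<alpha>]
      v'_deriv_at v'_hi shifted_mult_v'_tendsto_0 v''_cont_Ioo weight_integrable]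
  have v'_int: "(v' has_integral (v hi - v lo)) {lo..hi}"
  proof (rule fundamental_theorem_of_calculus_interior_strong[where S = "{}"])
    show "continuous_on {lo..hi} v"
      by (rule continuous_on_subset[OF v_cont]) (use lohi in auto)
    show "(v has_vector_derivative v' s) (at s)" if "s \<in> {lo<..<hi} - {}" for s
      using v_deriv_at[of s] that lohi by (simp add: has_real_derivative_iff_has_vector_derivative)
  qed (use lohi in auto)
  then have A_v'_int: "((\<lambda>s. A * v' s) has_integral A * (v hi - v lo)) {lo..hi}"
    by (rule has_integral_mult_right)
  have split: "omega (1 - \<alpha>) (X - s) * v' s = (omega (1 - \<alpha>) (X - s) - A) * v' s + A * v' s" for s
    by (simp add: algebra_simps)
  show "(\<lambda>s. omega (1 - \<alpha>) (X - s) * v' s) integrable_on {lo..hi}"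
    unfolding split using by_parts(1) A_v'_int lohi
    by (intro integrable_add) (auto simp: A_def kernel_defect_def)
  show "\<bar>integral {lo..hi} (\<lambda>s. omega (1 - \<alpha>) (X - s) * v' s) - A * (v hi - v lo)\<bar>
    \<le> (A - omega (1 - \<alpha>) (X - lo)) * integral {lo..hi} (\<lambda>s. (s - lo) * \<bar>v'' s\<bar>)"
    unfolding split using by_parts A_v'_int v'_int lohi
    by (subst integral_add) (auto simp: A_def kernel_defect_def integral_unique)
qed

lemma acoef_interval_error:
  assumes \<alpha>: "0 < \<alpha>" "\<alpha> < 1" and N: "1 \<le> N" and t0: "t 0 = 0" and tN: "t N = T"
    and t_mono: "\<forall>i<N. t i < t (Suc i)" and m: "1 \<le> m" "m \<le> j" "j \<le> N"
  defines "lo \<equiv> thalf t (m - 1)" and "hi \<equiv> thalf t m"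
  shows "(\<lambda>s. omega (1 - \<alpha>) (thalf t j - s) * v' s) integrable_on {lo..hi}"
    and "\<bar>integral {lo..hi} (\<lambda>s. omega (1 - \<alpha>) (thalf t j - s) * v' s) - acoef \<alpha> t j m * (v hi - v lo)\<bar>
      \<le> (if m = j then acoef \<alpha> t j j else acoef \<alpha> t j (m + 1) - acoef \<alpha> t j m)
        * integral {lo..hi} (\<lambda>s. (s - lo) * \<bar>v'' s\<bar>)"
proof -
  have lohi: "0 \<le> lo" "lo < hi" "hi \<le> thalf t j" "hi < T"
    using thalf_le[OF t_mono, of 0 "m - 1"] thalf_less[OF t_mono, of "m - 1" m]
      thalf_le[OF t_mono, of m j] thalf_less_last[OF t_mono N, of m] m t0 tN
    by (auto simp: lo_def hi_def thalf_def)
  note err = kernel_interval_error[OF \<alpha> lohi]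
  show "(\<lambda>s. omega (1 - \<alpha>) (thalf t j - s) * v' s) integrable_on {lo..hi}"
    by (rule err(1))
  have "acoef \<alpha> t j m - omega (1 - \<alpha>) (thalf t j - lo)
      \<le> (if m = j then acoef \<alpha> t j j else acoef \<alpha> t j (m + 1) - acoef \<alpha> t j m)"
  proof (cases "m = j")
    case True
    have "0 \<le> omega (1 - \<alpha>) (thalf t j - lo)"
      using \<alpha> by (simp add: omega_def)
    then show ?thesis
      using True by simp
  next
    case False
    then show ?thesis
      using acoef_excess_le[OF \<alpha> t_mono, of m j] m by (simp add: lo_def)
  qed
  moreover have "0 \<le> integral {lo..hi} (\<lambda>s. (s - lo) * \<bar>v'' s\<bar>)"
    using weight_integrable lohi by (intro integral_nonneg) auto
  ultimately have "(acoef \<alpha> t j m - omega (1 - \<alpha>) (thalf t j - lo)) * integral {lo..hi} (\<lambda>s. (s - lo) * \<bar>v'' s\<bar>)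
      \<le> (if m = j then acoef \<alpha> t j j else acoef \<alpha> t j (m + 1) - acoef \<alpha> t j m)
        * integral {lo..hi} (\<lambda>s. (s - lo) * \<bar>v'' s\<bar>)"
    by (rule mult_right_mono)
  moreover have "acoef \<alpha> t j m = kernel_avg \<alpha> (thalf t j) lo hi"
    using m by (simp add: acoef_eq_kernel_avg lo_def hi_def)
  ultimately show "\<bar>integral {lo..hi} (\<lambda>s. omega (1 - \<alpha>) (thalf t j - s) * v' s) - acoef \<alpha> t j m * (v hi - v lo)\<bar>
      \<le> (if m = j then acoef \<alpha> t j j else acoef \<alpha> t j (m + 1) - acoef \<alpha> t j m)
        * integral {lo..hi} (\<lambda>s. (s - lo) * \<bar>v'' s\<bar>)"
    using err(2) by simp
qed

lemma Rerr_abs_le: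
  assumes \<alpha>: "0 < \<alpha>" "\<alpha> < 1" and N: "1 \<le> N" and t0: "t 0 = 0" and tN: "t N = T"
    and t_mono: "\<forall>i<N. t i < t (Suc i)" and j: "1 \<le> j" "j \<le> N"
  shows "\<bar>Rerr \<alpha> t v v' j\<bar> \<le> (\<Sum>m=1..j. (if m = j then acoef \<alpha> t j j else acoef \<alpha> t j (m + 1) - acoef \<alpha> t j m)
    * integral {thalf t (m - 1)..thalf t m} (\<lambda>s. (s - thalf t (m - 1)) * \<bar>v'' s\<bar>))"
proof -
  define g where "g = (\<lambda>s. omega (1 - \<alpha>) (thalf t j - s) * v' s)"
  note interval = acoef_interval_error[OF \<alpha> N t0 tN t_mono _ _ j(2), folded g_def]
  have "mono_on {..j} (thalf t)"
    by (rule mono_on_subset[OF mono_on_thalf[OF t_mono]]) (use j in auto)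
  from has_integral_sum_consecutive[of j "thalf t" g, OF this interval(1)]
  have "caputo \<alpha> v' (thalf t j) = (\<Sum>m=1..j. integral {thalf t (m - 1)..thalf t m} g)"
    unfolding caputo_def g_def[symmetric] using t0 by (simp add: thalf_def[of t 0] integral_unique)
  then have Rerr_eq: "Rerr \<alpha> t v v' j = (\<Sum>m=1..j. integral {thalf t (m - 1)..thalf t m} g
      - acoef \<alpha> t j m * (v (thalf t m) - v (thalf t (m - 1))))"
    by (simp add: Rerr_def sum_subtractf)
  show ?thesis
    unfolding Rerr_eq using interval(2) by (intro order_trans[OF sum_abs] sum_mono) auto
qed

end

text \<open>The monotonicity of the step sizes \<open>tau_mono\<close> is not needed: the coefficient inequalities used
  above hold on an arbitrary mesh.\<close>

theorem lemma2p6: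
  fixes T \<alpha> :: real and N n :: nat and t :: "nat \<Rightarrow> real"
    and v v' v'' :: "real \<Rightarrow> real"
  assumes T_pos: "T > 0" and alpha: "0 < \<alpha>" "\<alpha> < 1"
    and N_pos: "N \<ge> 1"
    and t0: "t 0 = 0" and tN: "t N = T"
    and t_mono: "\<forall>i<N. t i < t (Suc i)"
    and tau_mono: "\<forall>k\<in>{2..N}. tau t (k - 1) \<le> tau t k"
    and v_cont: "continuous_on {0..T} v"
    and v_d1: "\<forall>x\<in>{0<..T}. (v has_real_derivative v' x) (at x within {0<..T})"
    and v_d2: "\<forall>x\<in>{0<..T}. (v' has_real_derivative v'' x) (at x within {0<..T})"
    and v''_cont: "continuous_on {0<..T} v''"
    and v''_int: "(\<lambda>x. x * \<bar>v'' x\<bar>) integrable_on {0..T}"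
    and n: "1 \<le> n" "n \<le> N"
  shows "(\<Sum>j=1..n. dcc \<alpha> t n j * \<bar>Rerr \<alpha> t v v' j\<bar>)
    \<le> 2 * (\<Sum>j=1..n. dcc \<alpha> t n j * acoef \<alpha> t j j *
        integral {thalf t (j - 1)..thalf t j} (\<lambda>x. (x - thalf t (j - 1)) * \<bar>v'' x\<bar>))"
proof -
  interpret weighted_C2 T v v' v''
    using T_pos v_cont v_d1 v_d2 v''_cont v''_int by unfold_locales
  show ?thesis
    unfolding dcc_def
  proof (rule dcc_aux_weighted_sum_le)
    show "0 < acoef \<alpha> t k k" if "1 \<le> k" "k \<le> n" for k
      using acoef_pos[OF alpha t_mono] that n by simp
    show "acoef \<alpha> t j k \<le> acoef \<alpha> t j (k + 1)" if "1 \<le> k" "k < j" "j \<le> n" for j k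
      using acoef_le_next[OF alpha t_mono] that n by simp
    show "0 \<le> integral {thalf t (m - 1)..thalf t m} (\<lambda>x. (x - thalf t (m - 1)) * \<bar>v'' x\<bar>)"
      if "1 \<le> m" "m \<le> n" for m
      using weight_integrable thalf_le[OF t_mono, of 0 "m - 1"] thalf_less_last[OF t_mono N_pos, of m]
        that n t0 tN by (intro integral_nonneg) (auto simp: thalf_def)
    show "\<bar>Rerr \<alpha> t v v' j\<bar> \<le> (\<Sum>m=1..j. (if m = j then acoef \<alpha> t j j else acoef \<alpha> t j (m + 1) - acoef \<alpha> t j m)
      * integral {thalf t (m - 1)..thalf t m} (\<lambda>x. (x - thalf t (m - 1)) * \<bar>v'' x\<bar>))"
      if "1 \<le> j" "j \<le> n" for j
      using Rerr_abs_le[OF alpha N_pos t0 tN t_mono] that n by simp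
  qed
qed

end
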